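(* Let $G$ be a directed graph with positive integer edge weights, let $0<\epsilon\le 1$, let $x,y$ be nodes, let $h\ge 1$, $r\ge 0$, $\alpha\ge 1$, and let $\mathcal Q\subseteq V$ be a set of nodes such that $\mathcal P^h(x,y,\alpha(1+\epsilon)^r,G)\subseteq\mathcal Q$. Then $\mathcal P^h(x,y,\alpha(1+\epsilon)^r,G)\subseteq\mathcal P(x,y,\alpha(1+\epsilon)^{r+1},\tilde G^{h,r}[\mathcal Q])$.
   Context: For a weighted directed graph $H$, nodes $x,y$ and $D\ge 1$: the path union $\mathcal P(x,y,D,H)$ is the set of nodes lying on some path from $x$ to $y$ in $H$ of weight at most $D$; for an integer $h\ge 1$ the $h$-hop path union $\mathcal P^h(x,y,D,H)$ is the set of nodes lying on some path from $x$ to $y$ in $H$ with at most $h$ edges and weight at most $D$. For $h\ge 1$ and $r\ge 0$, $\tilde G^{h,r}$ has the same nodes and edges as $G$, with each edge weight rounded up to the next multiple of $\epsilon(1+\epsilon)^r/h$: $w_{\tilde G^{h,r}}(u,v)=\lceil w_G(u,v)\,h/(\epsilon(1+\epsilon)^r)\rceil\cdot\epsilon(1+\epsilon)^r/h$. $\tilde G^{h,r}[\mathcal Q]$ is the subgraph of $\tilde G^{h,r}$ induced by $\mathcal Q$. *)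

theory Defs
  imports "HOL-Analysis.Analysis"
begin

text \<open>A path is a nonempty list of vertices in which
  consecutive vertices are joined by edges (vertices may repeat).\<close>

definition wdigraph :: "'a set \<Rightarrow> ('a \<times> 'a) set \<Rightarrow> bool" where
  "wdigraph V E \<longleftrightarrow> finite V \<and> E \<subseteq> V \<times> V"

definition is_path :: "'a set \<Rightarrow> ('a \<times> 'a) set \<Rightarrow> 'a list \<Rightarrow> 'a \<Rightarrow> 'a \<Rightarrow> bool" where
  "is_path V E p x y \<longleftrightarrow> p \<noteq> [] \<and> hd p = x \<and> last p = y \<and> set p \<subseteq> V
     \<and> (\<forall>i. Suc i < length p \<longrightarrow> (p ! i, p ! Suc i) \<in> E)"

definition path_weight :: "('a \<times> 'a \<Rightarrow> real) \<Rightarrow> 'a list \<Rightarrow> real" where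
  "path_weight w p = (\<Sum>i<length p - 1. w (p ! i, p ! Suc i))"

definition path_hops :: "'a list \<Rightarrow> nat" where
  "path_hops p = length p - 1"

definition path_union ::
  "'a set \<Rightarrow> ('a \<times> 'a) set \<Rightarrow> ('a \<times> 'a \<Rightarrow> real) \<Rightarrow> 'a \<Rightarrow> 'a \<Rightarrow> real \<Rightarrow> 'a set" where
  "path_union V E w x y D =
     {v. \<exists>p. is_path V E p x y \<and> path_weight w p \<le> D \<and> v \<in> set p}"

definition hop_path_union ::
  "nat \<Rightarrow> 'a set \<Rightarrow> ('a \<times> 'a) set \<Rightarrow> ('a \<times> 'a \<Rightarrow> real) \<Rightarrow> 'a \<Rightarrow> 'a \<Rightarrow> real \<Rightarrow> 'a set" where
  "hop_path_union h V E w x y D =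
     {v. \<exists>p. is_path V E p x y \<and> path_hops p \<le> h \<and> path_weight w p \<le> D \<and> v \<in> set p}"

definition rounded_weight :: "real \<Rightarrow> nat \<Rightarrow> nat \<Rightarrow> ('a \<times> 'a \<Rightarrow> real) \<Rightarrow> 'a \<times> 'a \<Rightarrow> real" where
  "rounded_weight \<epsilon> h r w e =
     of_int \<lceil>w e * real h / (\<epsilon> * (1 + \<epsilon>) ^ r)\<rceil> * (\<epsilon> * (1 + \<epsilon>) ^ r / real h)"

definition induced_edges :: "('a \<times> 'a) set \<Rightarrow> 'a set \<Rightarrow> ('a \<times> 'a) set" where
  "induced_edges E Q = E \<inter> (Q \<times> Q)"

end

theory Submission
  imports Defs
begin

text \<open>Rounding each edge weight up to a multiple of \<open>\<epsilon>(1+\<epsilon>)^r/h\<close> adds less than one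
  unit per edge, so a path with at most \<open>h\<close> edges gains at most \<open>\<epsilon>(1+\<epsilon>)^r\<close>, which is
  absorbed by the extra factor \<open>1+\<epsilon>\<close> since \<open>\<alpha> \<ge> 1\<close>. All nodes of such a path lie in the
  hop path union, hence in \<open>Q\<close>, so the path survives in the induced subgraph.\<close>

lemma rounded_weight_le:
  assumes "0 < \<epsilon>" "h \<ge> 1"
  shows "rounded_weight \<epsilon> h r w e \<le> w e + \<epsilon> * (1 + \<epsilon>) ^ r / real h"
proof -
  define d where "d = \<epsilon> * (1 + \<epsilon>) ^ r / real h"
  have "d > 0" using assms by (simp add: d_def)
  have "w e * real h / (\<epsilon> * (1 + \<epsilon>) ^ r) = w e / d"
    using assms by (simp add: d_def field_simps)
  then have "rounded_weight \<epsilon> h r w e = of_int \<lceil>w e / d\<rceil> * d"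
    unfolding rounded_weight_def d_def by simp
  also have "\<dots> \<le> (w e / d + 1) * d"
    using \<open>d > 0\<close> by (intro mult_right_mono) (linarith, simp)
  also have "\<dots> = w e + d" using \<open>d > 0\<close> by (simp add: field_simps)
  finally show ?thesis by (simp add: d_def)
qed

lemma path_weight_le_add_hops:
  assumes "\<And>e. w' e \<le> w e + d"
  shows "path_weight w' p \<le> path_weight w p + real (path_hops p) * d"
proof -
  have "path_weight w' p \<le> (\<Sum>i<length p - 1. w (p ! i, p ! Suc i) + d)"
    unfolding path_weight_def by (intro sum_mono assms)
  also have "\<dots> = path_weight w p + real (path_hops p) * d"
    by (simp add: sum.distrib path_weight_def path_hops_def)
  finally show ?thesis .
qed

lemma is_path_induced:
  assumes "is_path V E p x y" "set p \<subseteq> Q"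
  shows "is_path Q (induced_edges E Q) p x y"
  using assms unfolding is_path_def induced_edges_def by (auto intro!: nth_mem)

lemma set_subset_hop_path_union:
  assumes "is_path V E p x y" "path_hops p \<le> h" "path_weight w p \<le> D"
  shows "set p \<subseteq> hop_path_union h V E w x y D"
  using assms unfolding hop_path_union_def by blast

lemma rounded_path_weight_le:
  assumes "0 < \<epsilon>" "h \<ge> 1" "path_hops p \<le> h" "path_weight w p \<le> D"
  shows "path_weight (rounded_weight \<epsilon> h r w) p \<le> D + \<epsilon> * (1 + \<epsilon>) ^ r"
proof -
  define d where "d = \<epsilon> * (1 + \<epsilon>) ^ r / real h"
  have "path_weight (rounded_weight \<epsilon> h r w) p \<le> path_weight w p + real (path_hops p) * d"
    using assms(1,2) by (intro path_weight_le_add_hops) (simp add: rounded_weight_le d_def)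
  also have "\<dots> \<le> D + real h * d"
    using assms by (intro add_mono mult_right_mono) (auto simp: d_def)
  also have "real h * d = \<epsilon> * (1 + \<epsilon>) ^ r" using assms(2) by (simp add: d_def)
  finally show ?thesis .
qed

theorem lemma6p3:
  fixes V :: "'a set" and E :: "('a \<times> 'a) set" and w :: "'a \<times> 'a \<Rightarrow> real"
    and \<epsilon> \<alpha> :: real and x y :: 'a and h r :: nat and Q :: "'a set"
  assumes G: "wdigraph V E"
    and wpos: "\<And>e. e \<in> E \<Longrightarrow> w e \<in> \<int> \<and> w e > 0"
    and eps: "0 < \<epsilon>" "\<epsilon> \<le> 1"
    and xy: "x \<in> V" "y \<in> V"
    and h: "h \<ge> 1"
    and alpha: "\<alpha> \<ge> 1"
    and QV: "Q \<subseteq> V"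
    and Qcov: "hop_path_union h V E w x y (\<alpha> * (1 + \<epsilon>) ^ r) \<subseteq> Q"
  shows "hop_path_union h V E w x y (\<alpha> * (1 + \<epsilon>) ^ r)
         \<subseteq> path_union Q (induced_edges E Q) (rounded_weight \<epsilon> h r w) x y
              (\<alpha> * (1 + \<epsilon>) ^ (r + 1))"
proof
  fix v assume "v \<in> hop_path_union h V E w x y (\<alpha> * (1 + \<epsilon>) ^ r)"
  then obtain p where p: "is_path V E p x y" "path_hops p \<le> h"
    "path_weight w p \<le> \<alpha> * (1 + \<epsilon>) ^ r" "v \<in> set p"
    unfolding hop_path_union_def by blast
  have "set p \<subseteq> Q"
    using set_subset_hop_path_union[OF p(1-3)] Qcov by (rule order.trans)
  with p(1) have "is_path Q (induced_edges E Q) p x y"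
    by (rule is_path_induced)
  moreover have "path_weight (rounded_weight \<epsilon> h r w) p \<le> \<alpha> * (1 + \<epsilon>) ^ r + \<epsilon> * (1 + \<epsilon>) ^ r"
    using eps(1) h p(2,3) by (rule rounded_path_weight_le)
  moreover have "\<alpha> * (1 + \<epsilon>) ^ r + \<epsilon> * (1 + \<epsilon>) ^ r \<le> \<alpha> * (1 + \<epsilon>) ^ (r + 1)"
    using alpha eps by (simp add: algebra_simps mult_right_mono)
  ultimately show "v \<in> path_union Q (induced_edges E Q) (rounded_weight \<epsilon> h r w) x y
      (\<alpha> * (1 + \<epsilon>) ^ (r + 1))"
    unfolding path_union_def using p(4) by fastforce
qed

end
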